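(* Let $H_1,H_2$ be non-empty graphs with $m_2(H_1)\ge m_2(H_2)>1$, let $\varepsilon>0$, and suppose every graph in $\hat{\mathcal{A}}(H_1,H_2,\varepsilon)$ has a valid edge-colouring for $H_1$ and $H_2$. Then every $(H_1,H_2)$-sparse $\hat{\mathcal{A}}$-graph $G$ has a valid edge-colouring for $H_1$ and $H_2$ (and such a colouring is obtained by colouring each member of $\mathcal{S}_G$ independently with a valid edge-colouring).
   Context: For a graph $H$ write $v_H=|V(H)|$, $e_H=|E(H)|$; $d_2(H) = (e_H-1)/(v_H-2)$ if $H$ is non-empty and $v_H \geq 3$, $d_2(K_2)=1/2$, $d_2(H)=0$ otherwise; $m_2(H)=\max_{J\subseteq H} d_2(J)$. $d_2(H_1,H_2) = e_{H_1}/(v_{H_1} - 2 + 1/m_2(H_2))$ if $H_2$ is non-empty and $v_{H_1}\ge2$, and $0$ otherwise; $m_2(H_1,H_2)=\max_{J\subseteq H_1} d_2(J,H_2)$. For a graph $A$, $d(A)=e_A/v_A$ ($0$ if $v_A=0$) and $m(A)=\max_{J\subseteq A} d(J)$. A red/blue colouring of the edges of $G$ is a valid edge-colouring for $H_1$ and $H_2$ if it contains no red copy of $H_1$ and no blue copy of $H_2$. For a graph $G$, $\mathcal{R}_G$ (resp. $\mathcal{L}_G$) is the set of subgraphs of $G$ isomorphic to $H_1$ (resp. $H_2$); $\mathcal{L}^*_G=\{L\in\mathcal{L}_G:\forall e\in E(L)\ \exists R\in\mathcal{R}_G,\ E(L)\cap E(R)=\{e\}\}$. $\mathcal{C}(H_1,H_2)$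 is the class of graphs in which every edge $e$ satisfies $E(L)\cap E(R)=\{e\}$ for some $L\in\mathcal{L}_G,R\in\mathcal{R}_G$; $\mathcal{C}^*(H_1,H_2)$ the class of graphs in which every edge lies in some $L\in\mathcal{L}^*_G$. $\hat{\mathcal{A}}=\hat{\mathcal{A}}(H_1,H_2,\varepsilon)$ is the class of $2$-connected graphs $A$ with $m(A)\le m_2(H_1,H_2)+\varepsilon$ such that $A\in\mathcal{C}^*(H_1,H_2)$ if $m_2(H_1)>m_2(H_2)$ and $A\in\mathcal{C}(H_1,H_2)$ if $m_2(H_1)=m_2(H_2)$. For a graph $G$, $\mathcal{S}_G$ is the family of subgraphs $S\subseteq G$ isomorphic to a member of $\hat{\mathcal{A}}$ that are maximal, i.e. there is no $S'\subseteq G$ with $S\subsetneq S'$ and $S'$ isomorphic to a member of $\hat{\mathcal{A}}$; for $e\in E(G)$, $\mathcal{S}_G(e)=\{S\in\mathcal{S}_G: e\in E(S)\}$. $G$ is an $\hat{\mathcal{A}}$-graph if $|\mathcal{S}_G(e)|=1$ for every $e\in E(G)$. $\mathcal{T}_G$ is the family of subgraphs $T\subseteq G$ with $T\cong H_1$ or $T\cong H_2$ such that $|\bigcup_{e\in E(T)}\mathcal{S}_G(e)|\ge 2$; $G$ is $(H_1,H_2)$-sparse if $\mathcal{T}_G=\emptyset$. *)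

theory Defs
  imports Complex_Main
begin

type_synonym 'a graph = "'a set \<times> 'a set set"

definition verts :: "'a graph \<Rightarrow> 'a set" where "verts G = fst G"
definition edges :: "'a graph \<Rightarrow> 'a set set" where "edges G = snd G"

definition graph :: "'a graph \<Rightarrow> bool" where
  "graph G \<longleftrightarrow> finite (verts G) \<and>
     (\<forall>e\<in>edges G. \<exists>u v. u \<noteq> v \<and> e = {u, v} \<and> u \<in> verts G \<and> v \<in> verts G)"

definition vnum :: "'a graph \<Rightarrow> nat" where "vnum G = card (verts G)"
definition enum :: "'a graph \<Rightarrow> nat" where "enum G = card (edges G)"

definition subgraph :: "'a graph \<Rightarrow> 'a graph \<Rightarrow> bool" where
  "subgraph J H \<longleftrightarrow> graph J \<and> verts J \<subseteq> verts H \<and> edges J \<subseteq> edges H"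

definition iso :: "'a graph \<Rightarrow> 'b graph \<Rightarrow> bool" where
  "iso G H \<longleftrightarrow> (\<exists>f. bij_betw f (verts G) (verts H) \<and>
     (\<forall>u\<in>verts G. \<forall>v\<in>verts G. {u, v} \<in> edges G \<longleftrightarrow> {f u, f v} \<in> edges H))"

definition d2 :: "'a graph \<Rightarrow> real" where
  "d2 H = (if edges H \<noteq> {} \<and> vnum H \<ge> 3 then (real (enum H) - 1) / (real (vnum H) - 2)
           else if vnum H = 2 \<and> enum H = 1 then 1/2 else 0)"

definition m2 :: "'a graph \<Rightarrow> real" where
  "m2 H = Max {d2 J | J. subgraph J H}"

definition d2pair :: "'a graph \<Rightarrow> 'b graph \<Rightarrow> real" where
  "d2pair H1 H2 = (if edges H2 \<noteq> {} \<and> vnum H1 \<ge> 2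
      then real (enum H1) / (real (vnum H1) - 2 + 1 / m2 H2) else 0)"

definition m2pair :: "'a graph \<Rightarrow> 'b graph \<Rightarrow> real" where
  "m2pair H1 H2 = Max {d2pair J H2 | J. subgraph J H1}"

definition dens :: "'a graph \<Rightarrow> real" where
  "dens A = (if vnum A = 0 then 0 else real (enum A) / real (vnum A))"

definition mdens :: "'a graph \<Rightarrow> real" where
  "mdens A = Max {dens J | J. subgraph J A}"

text \<open>Copies and colourings (colour True = red, False = blue).\<close>
definition copies :: "'a graph \<Rightarrow> 'b graph \<Rightarrow> 'a graph set" where
  "copies G H = {J. subgraph J G \<and> iso J H}"

definition valid_col :: "'b graph \<Rightarrow> 'c graph \<Rightarrow> 'a graph \<Rightarrow> ('a set \<Rightarrow> bool) \<Rightarrow> bool" where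
  "valid_col H1 H2 G col \<longleftrightarrow>
     \<not> (\<exists>R\<in>copies G H1. \<forall>e\<in>edges R. col e) \<and>
     \<not> (\<exists>L\<in>copies G H2. \<forall>e\<in>edges L. \<not> col e)"

definition Lstar :: "'b graph \<Rightarrow> 'c graph \<Rightarrow> 'a graph \<Rightarrow> 'a graph set" where
  "Lstar H1 H2 G = {L\<in>copies G H2. \<forall>e\<in>edges L. \<exists>R\<in>copies G H1. edges L \<inter> edges R = {e}}"

definition classC :: "'b graph \<Rightarrow> 'c graph \<Rightarrow> 'a graph \<Rightarrow> bool" where
  "classC H1 H2 G \<longleftrightarrow> (\<forall>e\<in>edges G. \<exists>L\<in>copies G H2. \<exists>R\<in>copies G H1. edges L \<inter> edges R = {e})"

definition classCstar :: "'b graph \<Rightarrow> 'c graph \<Rightarrow> 'a graph \<Rightarrow> bool" where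
  "classCstar H1 H2 G \<longleftrightarrow> (\<forall>e\<in>edges G. \<exists>L\<in>Lstar H1 H2 G. e \<in> edges L)"

definition gconnected :: "'a graph \<Rightarrow> bool" where
  "gconnected G \<longleftrightarrow> verts G \<noteq> {} \<and>
     (\<forall>u\<in>verts G. \<forall>v\<in>verts G. (\<lambda>x y. {x, y} \<in> edges G)\<^sup>*\<^sup>* u v)"

definition del_vert :: "'a graph \<Rightarrow> 'a \<Rightarrow> 'a graph" where
  "del_vert G x = (verts G - {x}, {e\<in>edges G. x \<notin> e})"

definition two_connected :: "'a graph \<Rightarrow> bool" where
  "two_connected G \<longleftrightarrow> vnum G \<ge> 3 \<and> gconnected G \<and> (\<forall>x\<in>verts G. gconnected (del_vert G x))"

definition Ahat :: "'b graph \<Rightarrow> 'c graph \<Rightarrow> real \<Rightarrow> 'a graph \<Rightarrow> bool" where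
  "Ahat H1 H2 \<epsilon> A \<longleftrightarrow> graph A \<and> two_connected A \<and> mdens A \<le> m2pair H1 H2 + \<epsilon> \<and>
     (m2 H1 > m2 H2 \<longrightarrow> classCstar H1 H2 A) \<and>
     (m2 H1 = m2 H2 \<longrightarrow> classC H1 H2 A)"

definition SG :: "'b graph \<Rightarrow> 'c graph \<Rightarrow> real \<Rightarrow> 'a graph \<Rightarrow> 'a graph set" where
  "SG H1 H2 \<epsilon> G = {S. subgraph S G \<and> Ahat H1 H2 \<epsilon> S \<and>
      \<not> (\<exists>S'. subgraph S' G \<and> subgraph S S' \<and> S \<noteq> S' \<and> Ahat H1 H2 \<epsilon> S')}"

definition SGe :: "'b graph \<Rightarrow> 'c graph \<Rightarrow> real \<Rightarrow> 'a graph \<Rightarrow> 'a set \<Rightarrow> 'a graph set" where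
  "SGe H1 H2 \<epsilon> G e = {S\<in>SG H1 H2 \<epsilon> G. e \<in> edges S}"

definition Ahat_graph :: "'b graph \<Rightarrow> 'c graph \<Rightarrow> real \<Rightarrow> 'a graph \<Rightarrow> bool" where
  "Ahat_graph H1 H2 \<epsilon> G \<longleftrightarrow> (\<forall>e\<in>edges G. card (SGe H1 H2 \<epsilon> G e) = 1)"

definition TG :: "'b graph \<Rightarrow> 'c graph \<Rightarrow> real \<Rightarrow> 'a graph \<Rightarrow> 'a graph set" where
  "TG H1 H2 \<epsilon> G = {T. subgraph T G \<and> (iso T H1 \<or> iso T H2) \<and>
      card (\<Union>e\<in>edges T. SGe H1 H2 \<epsilon> G e) \<ge> 2}"

definition sparse :: "'b graph \<Rightarrow> 'c graph \<Rightarrow> real \<Rightarrow> 'a graph \<Rightarrow> bool" where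
  "sparse H1 H2 \<epsilon> G \<longleftrightarrow> TG H1 H2 \<epsilon> G = {}"

end

theory Submission
  imports Defs
begin

text \<open>A monochromatic copy of \<open>H\<^sub>1\<close> or \<open>H\<^sub>2\<close> in \<open>G\<close> is not in \<open>\<T>\<^sub>G\<close>, so by sparseness all its
  edges lie in one member \<open>S\<close> of \<open>\<S>\<^sub>G\<close>, where the combined colouring agrees with the valid
  colouring of \<open>S\<close>. Since \<open>S\<close> already contains copies of \<open>H\<^sub>1\<close> and \<open>H\<^sub>2\<close>, it has enough vertices
  to also host the isolated vertices of the copy, so the copy can be moved into \<open>S\<close>,
  contradicting the validity of the colouring of \<open>S\<close>.\<close>

lemma graph_finite_edges:
  assumes g: "graph G" shows "finite (edges G)"
proof -
  have "edges G \<subseteq> Pow (verts G)" using g by (fastforce simp: graph_def)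
  moreover have "finite (verts G)" using g by (simp add: graph_def)
  ultimately show ?thesis by (meson finite_Pow_iff finite_subset)
qed

lemma graph_Union_edges_subset: "graph G \<Longrightarrow> \<Union>(edges G) \<subseteq> verts G"
  by (fastforce simp: graph_def)

lemma iso_card_verts: "iso G H \<Longrightarrow> card (verts G) = card (verts H)"
  unfolding iso_def using bij_betw_same_card by blast

lemma iso_sym: assumes "iso G H" shows "iso H G"
proof -
  obtain f where f: "bij_betw f (verts G) (verts H)"
    "\<forall>u\<in>verts G. \<forall>v\<in>verts G. {u, v} \<in> edges G \<longleftrightarrow> {f u, f v} \<in> edges H"
    using assms unfolding iso_def by blast
  define g where "g = the_inv_into (verts G) f"
  have g: "bij_betw g (verts H) (verts G)"
    unfolding g_def using f(1) by (rule bij_betw_the_inv_into)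
  have fg: "f (g x) = x" if "x \<in> verts H" for x
    unfolding g_def using f(1) that f_the_inv_into_f_bij_betw by metis
  have "{u, v} \<in> edges H \<longleftrightarrow> {g u, g v} \<in> edges G" if "u \<in> verts H" "v \<in> verts H" for u v
  proof -
    have "g u \<in> verts G" "g v \<in> verts G" using g that bij_betwE by blast+
    then show ?thesis using f(2) fg that by metis
  qed
  then show ?thesis unfolding iso_def using g by blast
qed

lemma iso_trans: assumes "iso G H" "iso H K" shows "iso G K"
proof -
  obtain f where f: "bij_betw f (verts G) (verts H)"
    "\<forall>u\<in>verts G. \<forall>v\<in>verts G. {u, v} \<in> edges G \<longleftrightarrow> {f u, f v} \<in> edges H"
    using assms(1) unfolding iso_def by blast
  obtain g where g: "bij_betw g (verts H) (verts K)"
    "\<forall>u\<in>verts H. \<forall>v\<in>verts H. {u, v} \<in> edges H \<longleftrightarrow> {g u, g v} \<in> edges K"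
    using assms(2) unfolding iso_def by blast
  have "{u, v} \<in> edges G \<longleftrightarrow> {(g \<circ> f) u, (g \<circ> f) v} \<in> edges K"
    if "u \<in> verts G" "v \<in> verts G" for u v
  proof -
    have "f u \<in> verts H" "f v \<in> verts H" using f(1) that bij_betwE by blast+
    then show ?thesis using f(2) g(2) that by simp
  qed
  then show ?thesis unfolding iso_def using bij_betw_trans[OF f(1) g(1)] by blast
qed

lemma iso_edges_nonempty:
  assumes "iso G H" "graph H" "edges H \<noteq> {}"
  shows "edges G \<noteq> {}"
proof -
  obtain f where f: "\<forall>u\<in>verts H. \<forall>v\<in>verts H. {u, v} \<in> edges H \<longleftrightarrow> {f u, f v} \<in> edges G"
    using iso_sym[OF assms(1)] unfolding iso_def by blast
  obtain e where e: "e \<in> edges H" using assms(3) by blast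
  then obtain u v where "e = {u, v}" "u \<in> verts H" "v \<in> verts H"
    using assms(2) unfolding graph_def by blast
  then show ?thesis using f e by blast
qed

lemma graph_change_verts:
  assumes "graph (V, E)" "\<Union>E \<subseteq> V'" "finite V'"
  shows "graph (V', E)"
proof -
  have "\<exists>u v. u \<noteq> v \<and> e = {u, v} \<and> u \<in> V' \<and> v \<in> V'" if e: "e \<in> E" for e
  proof -
    obtain u v where "u \<noteq> v" "e = {u, v}"
      using assms(1) e by (auto simp: graph_def edges_def)
    moreover have "e \<subseteq> V'" using assms(2) e by blast
    ultimately show ?thesis by blast
  qed
  then show ?thesis using assms(3) by (simp add: graph_def verts_def edges_def)
qed

text \<open>The vertices covered by edges are kept fixed and the isolated ones matched arbitrarily.\<close>

lemma iso_same_edges: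
  assumes G: "graph (V, E)" and G': "graph (V', E)" and card: "card V = card V'"
  shows "iso (V, E) (V', E)"
proof -
  let ?N = "\<Union>E"
  have fin: "finite V" "finite V'" using G G' by (simp_all add: graph_def verts_def)
  have N: "?N \<subseteq> V" "?N \<subseteq> V'"
    using graph_Union_edges_subset[OF G] graph_Union_edges_subset[OF G']
    by (simp_all add: verts_def edges_def)
  then have "card (V - ?N) = card (V' - ?N)"
    using fin card by (simp add: card_Diff_subset finite_subset)
  then obtain g where g: "bij_betw g (V - ?N) (V' - ?N)"
    using fin finite_same_card_bij by blast
  define h where "h x = (if x \<in> ?N then x else g x)" for x
  have "bij_betw h (V - ?N) (V' - ?N)"
    using g by (rule bij_betw_cong[THEN iffD1, rotated]) (simp add: h_def)
  moreover have "bij_betw h ?N ?N"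
    by (rule bij_betw_cong[THEN iffD1, of _ id, rotated]) (auto simp: h_def)
  ultimately have "bij_betw h ((V - ?N) \<union> ?N) ((V' - ?N) \<union> ?N)"
    by (rule bij_betw_combine) blast
  then have h: "bij_betw h V V'"
    using N by (simp add: Un_absorb2)
  have covered: "h x \<in> ?N \<longleftrightarrow> x \<in> ?N" if "x \<in> V" for x
  proof (cases "x \<in> ?N")
    case False
    then have "g x \<in> V' - ?N" using g that by (blast dest: bij_betwE)
    then show ?thesis using False by (simp add: h_def)
  qed (simp add: h_def)
  have edge: "{u, v} \<in> E \<longleftrightarrow> {h u, h v} \<in> E" if "u \<in> V" "v \<in> V" for u v
  proof
    assume e: "{u, v} \<in> E"
    then have "u \<in> ?N" "v \<in> ?N" by blast+
    then show "{h u, h v} \<in> E" using e by (simp add: h_def)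
  next
    assume e: "{h u, h v} \<in> E"
    then have "h u \<in> ?N" "h v \<in> ?N" by blast+
    then have "u \<in> ?N" "v \<in> ?N" using covered that by simp_all
    then show "{u, v} \<in> E" using e by (simp add: h_def)
  qed
  show ?thesis unfolding iso_def verts_def edges_def fst_conv snd_conv
    by (intro exI[of _ h] conjI ballI h edge) assumption+
qed

lemma copy_with_same_edges:
  assumes S: "graph S" and J: "graph J" "iso J H" and sub: "edges J \<subseteq> edges S"
    and card: "card (verts H) \<le> card (verts S)"
  shows "\<exists>J'\<in>copies S H. edges J' = edges J"
proof -
  let ?N = "\<Union>(edges J)"
  have finS: "finite (verts S)" using S by (simp add: graph_def)
  have "finite (verts J)" using J(1) by (simp add: graph_def)
  then have "card ?N \<le> card (verts J)"
    using graph_Union_edges_subset[OF J(1)] by (rule card_mono)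
  moreover have "card (verts J) \<le> card (verts S)"
    using card iso_card_verts[OF J(2)] by simp
  moreover have "?N \<subseteq> verts S"
    using graph_Union_edges_subset[OF S] sub by blast
  ultimately have "\<exists>V. ?N \<subseteq> V \<and> V \<subseteq> verts S \<and> card V = card (verts J)"
    by (rule exists_subset_between[OF _ _ _ finS])
  then obtain V where V: "?N \<subseteq> V" "V \<subseteq> verts S" "card V = card (verts J)"
    by blast
  have J': "graph (verts J, edges J)" using J(1) by (simp add: verts_def edges_def)
  have V_graph: "graph (V, edges J)"
    using graph_change_verts[OF J' V(1) finite_subset[OF V(2) finS]] .
  have "iso (verts J, edges J) (V, edges J)"
    using iso_same_edges[OF J' V_graph] V(3) by simp
  then have "iso (V, edges J) H"
    using iso_trans[OF iso_sym J(2)] by (simp add: verts_def edges_def)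
  moreover have "subgraph (V, edges J) S"
    using V_graph V(2) sub by (simp add: subgraph_def verts_def edges_def)
  ultimately show ?thesis
    by (intro bexI[of _ "(V, edges J)"]) (simp_all add: copies_def edges_def)
qed

lemma two_connected_edges_nonempty:
  assumes "two_connected S" shows "edges S \<noteq> {}"
proof -
  have "2 \<le> card (verts S)" using assms by (simp add: two_connected_def vnum_def)
  then obtain T where "T \<subseteq> verts S" "card T = 2" by (rule obtain_subset_with_card_n)
  then obtain u v where uv: "u \<noteq> v" "u \<in> verts S" "v \<in> verts S" by (auto simp: card_2_iff)
  then have "(\<lambda>x y. {x, y} \<in> edges S)\<^sup>*\<^sup>* u v"
    using assms by (simp add: two_connected_def gconnected_def)
  then show ?thesis using uv(1) by (cases rule: converse_rtranclpE) auto
qed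

lemma classCstar_imp_classC:
  assumes "classCstar H1 H2 G" shows "classC H1 H2 G"
  unfolding classC_def
proof
  fix e assume "e \<in> edges G"
  then obtain L where "L \<in> Lstar H1 H2 G" "e \<in> edges L"
    using assms unfolding classCstar_def by blast
  then show "\<exists>L\<in>copies G H2. \<exists>R\<in>copies G H1. edges L \<inter> edges R = {e}"
    unfolding Lstar_def by blast
qed

lemma Ahat_classC: "Ahat H1 H2 \<epsilon> S \<Longrightarrow> m2 H2 \<le> m2 H1 \<Longrightarrow> classC H1 H2 S"
  by (cases "m2 H2 < m2 H1") (auto simp: Ahat_def intro: classCstar_imp_classC)

lemma copy_card_verts_le:
  "J \<in> copies S H \<Longrightarrow> finite (verts S) \<Longrightarrow> card (verts J) \<le> card (verts S)"
  unfolding copies_def subgraph_def by (simp add: card_mono)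

lemma Ahat_card_verts_copy:
  assumes A: "Ahat H1 H2 \<epsilon> S" and "m2 H2 \<le> m2 H1" and T: "iso T H1 \<or> iso T H2"
  shows "card (verts T) \<le> card (verts S)"
proof -
  have "two_connected S" using A by (simp add: Ahat_def)
  then obtain e where "e \<in> edges S" using two_connected_edges_nonempty by blast
  then obtain L R where LR: "L \<in> copies S H2" "R \<in> copies S H1"
    using Ahat_classC[OF assms(1,2)] unfolding classC_def by blast
  have "finite (verts S)" using A by (simp add: Ahat_def graph_def)
  then have "card (verts L) \<le> card (verts S)" "card (verts R) \<le> card (verts S)"
    using LR copy_card_verts_le by blast+
  moreover have "card (verts L) = card (verts H2)" "card (verts R) = card (verts H1)"
    using LR by (simp_all add: copies_def iso_card_verts)
  moreover have "card (verts T) = card (verts H1) \<or> card (verts T) = card (verts H2)"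
    using T iso_card_verts[of T H1] iso_card_verts[of T H2] by blast
  ultimately show ?thesis by linarith
qed

lemma sparse_SGe_constant_on_copy:
  assumes "sparse H1 H2 \<epsilon> G" "Ahat_graph H1 H2 \<epsilon> G" "graph G"
    and T: "subgraph T G" "iso T H1 \<or> iso T H2" "edges T \<noteq> {}"
  shows "\<exists>S. \<forall>e\<in>edges T. SGe H1 H2 \<epsilon> G e = {S}"
proof -
  let ?U = "\<Union>e\<in>edges T. SGe H1 H2 \<epsilon> G e"
  have single: "\<exists>S. SGe H1 H2 \<epsilon> G e = {S}" if "e \<in> edges T" for e
    using assms(2) T(1) that unfolding Ahat_graph_def subgraph_def
    by (metis card_1_singletonE subsetD)
  have "T \<notin> TG H1 H2 \<epsilon> G" using assms(1) by (simp add: sparse_def)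
  then have "card ?U < 2" using T(1,2) by (simp add: TG_def)
  moreover have "finite (edges T)"
    using graph_finite_edges[OF assms(3)] T(1) finite_subset by (auto simp: subgraph_def)
  then have "finite ?U" using single by (metis finite_UN_I finite.emptyI finite_insert)
  moreover have "?U \<noteq> {}" using single T(3) by force
  ultimately have "card ?U = 1" by (metis One_nat_def card_0_eq less_2_cases)
  then obtain S where U: "?U = {S}" by (rule card_1_singletonE)
  have "SGe H1 H2 \<epsilon> G e = {S}" if e: "e \<in> edges T" for e
  proof -
    obtain S' where "SGe H1 H2 \<epsilon> G e = {S'}" using single[OF e] ..
    moreover have "SGe H1 H2 \<epsilon> G e \<subseteq> ?U" using e by blast
    ultimately show ?thesis using U by simp
  qed
  then show ?thesis by blast
qed

lemma monochromatic_copy_in_SG: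
  fixes c :: "'a graph \<Rightarrow> 'a set \<Rightarrow> bool" and T :: "'a graph" and H :: "'d graph"
  assumes "sparse H1 H2 \<epsilon> G" "Ahat_graph H1 H2 \<epsilon> G" "graph G" "m2 H2 \<le> m2 H1"
    and T: "T \<in> copies G H" "iso T H1 \<or> iso T H2" "edges T \<noteq> {}"
    and mono: "\<forall>e\<in>edges T. P (c (THE S. S \<in> SGe H1 H2 \<epsilon> G e) e)"
  shows "\<exists>S\<in>SG H1 H2 \<epsilon> G. \<exists>T'\<in>copies S H. \<forall>e\<in>edges T'. P (c S e)"
proof -
  have sub: "subgraph T G" and iso: "iso T H" using T(1) by (auto simp: copies_def)
  obtain S where S: "\<forall>e\<in>edges T. SGe H1 H2 \<epsilon> G e = {S}"
    using sparse_SGe_constant_on_copy[OF assms(1-3) sub T(2,3)] by blast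
  then have SG: "S \<in> SG H1 H2 \<epsilon> G" and edges: "edges T \<subseteq> edges S"
    using T(3) by (auto simp: SGe_def)
  then have A: "Ahat H1 H2 \<epsilon> S" by (simp add: SG_def)
  have "card (verts H) \<le> card (verts S)"
    using Ahat_card_verts_copy[OF A assms(4) T(2)] iso_card_verts[OF iso] by simp
  then obtain T' where "T' \<in> copies S H" "edges T' = edges T"
    using copy_with_same_edges[OF _ _ iso edges] A sub by (auto simp: Ahat_def subgraph_def)
  moreover have "\<forall>e\<in>edges T. P (c S e)" using mono S by simp
  ultimately show ?thesis using SG by metis
qed

lemma valid_col_combined:
  fixes c :: "'a graph \<Rightarrow> 'a set \<Rightarrow> bool"
  assumes "graph H1" "graph H2" "edges H1 \<noteq> {}" "edges H2 \<noteq> {}" "m2 H2 \<le> m2 H1"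
    and G: "graph G" "sparse H1 H2 \<epsilon> G" "Ahat_graph H1 H2 \<epsilon> G"
    and valid: "\<forall>S\<in>SG H1 H2 \<epsilon> G. valid_col H1 H2 S (c S)"
  shows "valid_col H1 H2 G (\<lambda>e. c (THE S. S \<in> SGe H1 H2 \<epsilon> G e) e)"
proof -
  note in_SG = monochromatic_copy_in_SG[OF G(2,3,1) assms(5)]
  show ?thesis unfolding valid_col_def
  proof (intro conjI notI)
    assume "\<exists>R\<in>copies G H1. \<forall>e\<in>edges R. c (THE S. S \<in> SGe H1 H2 \<epsilon> G e) e"
    then obtain R where
      R: "R \<in> copies G H1" "\<forall>e\<in>edges R. c (THE S. S \<in> SGe H1 H2 \<epsilon> G e) e"
      by blast
    then have iso: "iso R H1" by (simp add: copies_def)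
    then have "edges R \<noteq> {}" using iso_edges_nonempty assms(1,3) by blast
    then show False
      using in_SG[where P = "\<lambda>b. b" and c = c, OF R(1) disjI1[OF iso] _ R(2)] valid
      unfolding valid_col_def by blast
  next
    assume "\<exists>L\<in>copies G H2. \<forall>e\<in>edges L. \<not> c (THE S. S \<in> SGe H1 H2 \<epsilon> G e) e"
    then obtain L where
      L: "L \<in> copies G H2" "\<forall>e\<in>edges L. \<not> c (THE S. S \<in> SGe H1 H2 \<epsilon> G e) e"
      by blast
    then have iso: "iso L H2" by (simp add: copies_def)
    then have "edges L \<noteq> {}" using iso_edges_nonempty assms(2,4) by blast
    then show False
      using in_SG[where P = Not and c = c, OF L(1) disjI2[OF iso] _ L(2)] valid
      unfolding valid_col_def by blast
  qed
qed

theorem lemma5p1: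
  fixes H1 :: "'b graph" and H2 :: "'c graph" and G :: "'a graph" and \<epsilon> :: real
  assumes "graph H1" and "graph H2" and "edges H1 \<noteq> {}" and "edges H2 \<noteq> {}"
    and "m2 H1 \<ge> m2 H2" and "m2 H2 > 1" and "\<epsilon> > 0"
    and "\<forall>A :: 'a graph. Ahat H1 H2 \<epsilon> A \<longrightarrow> (\<exists>col. valid_col H1 H2 A col)"
    and "graph G" and "sparse H1 H2 \<epsilon> G" and "Ahat_graph H1 H2 \<epsilon> G"
  shows "(\<exists>col. valid_col H1 H2 G col) \<and>
    (\<forall>c :: 'a graph \<Rightarrow> 'a set \<Rightarrow> bool.
       (\<forall>S\<in>SG H1 H2 \<epsilon> G. valid_col H1 H2 S (c S)) \<longrightarrow>
       valid_col H1 H2 G (\<lambda>e. c (THE S. S \<in> SGe H1 H2 \<epsilon> G e) e))"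
proof -
  note combined = valid_col_combined[OF assms(1-5,9-11)]
  have "\<forall>S\<in>SG H1 H2 \<epsilon> G. \<exists>col. valid_col H1 H2 S col"
    using assms(8) by (simp add: SG_def)
  then obtain c where "\<forall>S\<in>SG H1 H2 \<epsilon> G. valid_col H1 H2 S (c S)"
    by (metis bchoice)
  then show ?thesis using combined by blast
qed

end
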